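(* Let $\eta(\omega)=\pi(\omega)/\rho(\omega)$, where $\pi$ and $\rho$ are polynomials of degrees $m$ and $n$ respectively with $n\ge m+1$, and $\rho$ has no zeros in $[0,\infty)$. Let $a_1,\dots,a_K$ be the poles of $\eta(z)$. Then there is a polynomial $P_{n-1}$ of degree at most $n-1$ such that $$\int_0^\infty\frac{\eta(\omega)}{\omega-\zeta}d\omega=\frac{P_{n-1}(\zeta)-\pi(\zeta)\log(-\zeta)}{\rho(\zeta)}$$ for all $\zeta\in\mathbb C\setminus([0,\infty)\cup\{a_k\}_{k=1}^K)$, where for $\zeta=|\zeta|e^{i\theta}$ with $0\le\theta\le2\pi$ one sets $-\zeta=|\zeta|e^{i\phi}$ with $-\pi\le\phi\le\pi$ and $\log(-\zeta)=\log|\zeta|+i\phi$. *)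

theory Defs
  imports "HOL-Analysis.Analysis" "HOL-Computational_Algebra.Polynomial"
begin

end

theory Submission
  imports Defs "HOL-Real_Asymp.Real_Asymp"
begin

(* Write n = deg r. The Bezoutian identity
     r(z) p(w) - p(z) r(w) = (w - z) * (SUM j<n. s_j(z) w^j)
   holds with polynomials s_j of degree < n, and s_(n-1) = -lc(r) p. Dividing by r(z) r(w) (w - z)
   splits the integrand into p(z)/(r(z)(w - z)) plus the terms s_j(z) w^j / (r(z) r(w)). Only the
   top term j = n-1 is not integrable. Pairing it with the Cauchy kernel through 1/(w+1) gives
     p(z) [(1/(w - z) - 1/(w + 1)) + (1/(w + 1) - lc(r) w^(n-1)/r(w))],
   whose first part integrates to -Log(-z) and whose second part integrates to a constant C.
   Hence P = C p + SUM j<n-1. c_j s_j with c_j the integral of w^j/r(w) over [0,oo). *)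

lemma poly_shift_eq_pCons: "poly_shift j q = pCons (coeff q j) (poly_shift (Suc j) q)"
  by (simp add: poly_eq_iff coeff_poly_shift coeff_pCons split: nat.split)

lemma poly_shift_ge_degree:
  assumes "degree q \<le> n"
  shows "poly_shift n q = [:coeff q n:]"
  using assms by (auto simp: poly_eq_iff coeff_poly_shift coeff_pCons coeff_eq_0 split: nat.split)

lemma monom_mult_poly_shift:
  fixes q :: "'a::comm_ring_1 poly"
  shows "monom 1 n * poly_shift n q = q - poly_cutoff n q"
  by (auto simp: poly_eq_iff coeff_monom_mult coeff_poly_shift coeff_poly_cutoff)

lemma degree_poly_cutoff_Suc_le: "degree (poly_cutoff (Suc n) q) \<le> n"
  by (rule degree_le) (simp add: coeff_poly_cutoff)

lemma poly_diff_eq_poly_shift_sum: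
  fixes q :: "'a::comm_ring_1 poly"
  assumes "degree q \<le> n"
  shows "poly q w - poly q z = (w - z) * (\<Sum>j<n. poly (poly_shift (Suc j) q) z * w ^ j)"
proof -
  define S where "S j = poly (poly_shift j q) z" for j
  have S_step: "S j = coeff q j + z * S (Suc j)" for j
    unfolding S_def by (subst poly_shift_eq_pCons[of j]) simp
  have "(w - z) * S (Suc j) * w ^ j = (S (Suc j) * w ^ Suc j - S j * w ^ j) + coeff q j * w ^ j" for j
    by (simp add: S_step[of j] algebra_simps)
  then have "(w - z) * (\<Sum>j<n. S (Suc j) * w ^ j) =
             (\<Sum>j<n. S (Suc j) * w ^ Suc j - S j * w ^ j) + (\<Sum>j<n. coeff q j * w ^ j)"
    by (simp add: sum_distrib_left mult.assoc flip: sum.distrib)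
  also have "\<dots> = S n * w ^ n - S 0 + (\<Sum>j<n. coeff q j * w ^ j)"
    by (subst sum_lessThan_telescope[where f = "\<lambda>j. S j * w ^ j"]) simp
  also have "\<dots> = poly q w - poly q z"
  proof -
    have "S n * w ^ n + (\<Sum>j<n. coeff q j * w ^ j) = (\<Sum>j\<le>n. coeff q j * w ^ j)"
      using assms by (simp add: S_def poly_shift_ge_degree lessThan_Suc_atMost[symmetric])
    moreover have "poly (\<Sum>j\<le>n. monom (coeff q j) j) w = (\<Sum>j\<le>n. coeff q j * w ^ j)"
      by (simp add: poly_sum poly_monom)
    ultimately show ?thesis
      using poly_as_sum_of_monoms'[OF assms] by (simp add: S_def)
  qed
  finally show ?thesis by (simp add: S_def)
qed

(* The coefficient of w^j, as a polynomial in z, of the Bezoutian (r(z) p(w) - p(z) r(w)) / (w - z). *)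
definition bezout_coeff :: "'a::comm_ring_1 poly \<Rightarrow> 'a poly \<Rightarrow> nat \<Rightarrow> 'a poly" where
  "bezout_coeff p r j = r * poly_shift (Suc j) p - p * poly_shift (Suc j) r"

lemma bezout_identity:
  assumes "degree p \<le> n" "degree r \<le> n"
  shows "poly r z * poly p w - poly p z * poly r w =
         (w - z) * (\<Sum>j<n. poly (bezout_coeff p r j) z * w ^ j)"
proof -
  have "poly r z * poly p w - poly p z * poly r w =
        poly r z * (poly p w - poly p z) - poly p z * (poly r w - poly r z)"
    by (simp add: algebra_simps)
  also have "\<dots> = (w - z) * (\<Sum>j<n. (poly r z * poly (poly_shift (Suc j) p) z -
                                     poly p z * poly (poly_shift (Suc j) r) z) * w ^ j)"
    unfolding poly_diff_eq_poly_shift_sum[OF assms(1)] poly_diff_eq_poly_shift_sum[OF assms(2)]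
    by (simp add: algebra_simps sum_subtractf sum_distrib_left)
  finally show ?thesis
    by (simp add: bezout_coeff_def)
qed

lemma degree_bezout_coeff:
  assumes "degree p \<le> n" "degree r \<le> n"
  shows "degree (bezout_coeff p r j) \<le> n - 1"
proof (cases "bezout_coeff p r j = 0")
  case False
  have "monom 1 (Suc j) * bezout_coeff p r j =
        r * (monom 1 (Suc j) * poly_shift (Suc j) p) - p * (monom 1 (Suc j) * poly_shift (Suc j) r)"
    by (simp add: bezout_coeff_def algebra_simps)
  also have "\<dots> = p * poly_cutoff (Suc j) r - r * poly_cutoff (Suc j) p"
    by (simp add: monom_mult_poly_shift algebra_simps)
  finally have "monom 1 (Suc j) * bezout_coeff p r j =
                p * poly_cutoff (Suc j) r - r * poly_cutoff (Suc j) p" .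
  moreover have "degree (p * poly_cutoff (Suc j) r - r * poly_cutoff (Suc j) p) \<le> n + j"
    using assms degree_poly_cutoff_Suc_le[of j]
    by (intro degree_diff_le order.trans[OF degree_mult_le] add_mono) auto
  moreover have "Suc j + degree (bezout_coeff p r j) \<le> degree (monom 1 (Suc j) * bezout_coeff p r j)"
    using False by (intro le_degree) (simp add: coeff_monom_mult)
  ultimately have "Suc j + degree (bezout_coeff p r j) \<le> n + j"
    by simp
  then show ?thesis
    by linarith
qed simp

lemma bezout_coeff_top:
  assumes "degree p < degree r"
  shows "bezout_coeff p r (degree r - 1) = smult (- lead_coeff r) p"
proof -
  have "poly_shift (degree r) p = 0"
    using assms by (simp add: poly_eq_iff coeff_poly_shift coeff_eq_0)
  then show ?thesis
    using assms poly_shift_ge_degree[of r "degree r"] by (simp add: bezout_coeff_def)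
qed

lemma bezout_partial_fraction:
  fixes p r :: "'a::field poly"
  assumes "degree p < degree r" "poly r w \<noteq> 0" "poly r z \<noteq> 0" "w \<noteq> z"
  shows "poly p w / poly r w / (w - z) =
         (poly p z * (1 / (w - z) - lead_coeff r * w ^ (degree r - 1) / poly r w) +
          (\<Sum>j<degree r - 1. poly (bezout_coeff p r j) z * (w ^ j / poly r w))) / poly r z"
proof -
  obtain m where m: "degree r = Suc m"
    using assms(1) by (cases "degree r") auto
  define S where "S = (\<Sum>j<m. poly (bezout_coeff p r j) z * w ^ j)"
  have "poly r z * poly p w - poly p z * poly r w = (w - z) * (S - lead_coeff r * poly p z * w ^ m)"
    using bezout_identity[of p "degree r" r z w] bezout_coeff_top[OF assms(1)] assms(1)
    by (simp add: m S_def algebra_simps)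
  then have "poly p z * poly r w + (w - z) * (S - lead_coeff r * poly p z * w ^ m) = poly r z * poly p w"
    by (simp add: algebra_simps)
  moreover have "w - z \<noteq> 0"
    using assms(4) by simp
  ultimately have "poly p w / poly r w / (w - z) =
                   (poly p z / (w - z) + (S - lead_coeff r * poly p z * w ^ m) / poly r w) / poly r z"
    using assms(2,3) by (simp add: field_simps)
  moreover have "(\<Sum>j<m. poly (bezout_coeff p r j) z * (w ^ j / poly r w)) = S / poly r w"
    by (simp add: S_def sum_divide_distrib)
  ultimately show ?thesis
    by (simp add: m diff_divide_distrib add_divide_distrib algebra_simps)
qed

lemma has_integral_inverse_square_shifted: "((\<lambda>x::real. 1 / (1 + x)^2) has_integral 1) {0..}"
proof (intro has_integral_to_inf)
  show "(\<lambda>x::real. 1 / (1 + x)^2) integrable_on {0..y}" for y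
    by (intro integrable_continuous_interval continuous_intros) auto
  have "((\<lambda>x::real. 1 / (1 + x)^2) has_integral (- 1 / (1 + y) - (- 1 / (1 + 0)))) {0..y}"
    if "y \<ge> 0" for y
    by (intro fundamental_theorem_of_calculus that)
       (auto intro!: derivative_eq_intros simp: power2_eq_square field_simps
             simp flip: has_real_derivative_iff_has_vector_derivative)
  then have "\<forall>\<^sub>F y in at_top. integral {0..y} (\<lambda>x::real. 1 / (1 + x)^2) = 1 - 1 / (1 + y)"
    by (intro eventually_at_top_linorderI) (auto dest!: integral_unique)
  moreover have "((\<lambda>y::real. 1 - 1 / (1 + y)) \<longlongrightarrow> 1) at_top"
    by real_asymp
  ultimately show "((\<lambda>y. integral {0..y} (\<lambda>x::real. 1 / (1 + x)^2)) \<longlongrightarrow> 1) at_top"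
    by (simp add: filterlim_cong)
qed auto

lemma rational_function_convergent_at_top:
  fixes c b :: "'a::real_normed_field poly"
  assumes "degree c \<le> degree b" "b \<noteq> 0"
  shows "\<exists>L. ((\<lambda>x::real. poly c (of_real x) / poly b (of_real x)) \<longlongrightarrow> L) at_top"
proof -
  \<comment> \<open>the substitution \<open>u = 1/x\<close> turns \<open>c/b\<close> into \<open>\<phi>\<close>, which is continuous at \<open>0\<close>\<close>
  define \<phi> where "\<phi> u = u ^ (degree b - degree c) * poly (reflect_poly c) u / poly (reflect_poly b) u"
    for u :: 'a
  have "isCont \<phi> 0"
    unfolding \<phi>_def using assms(2) by (intro continuous_intros) auto
  moreover have "((\<lambda>x::real. inverse (of_real x :: 'a)) \<longlongrightarrow> 0) at_top"
    using tendsto_of_real[OF tendsto_inverse_0_at_top[OF filterlim_ident], where 'a = 'a]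
    by (simp add: of_real_inverse)
  ultimately have "((\<lambda>x::real. \<phi> (inverse (of_real x))) \<longlongrightarrow> \<phi> 0) at_top"
    by (rule isCont_tendsto_compose)
  moreover have \<phi>_inverse: "\<phi> (inverse (of_real x)) = poly c (of_real x) / poly b (of_real x)"
    if "x > 0" for x
  proof -
    define u :: 'a where "u = inverse (of_real x)"
    have "u \<noteq> 0" "inverse u = of_real x"
      using that by (simp_all add: u_def)
    moreover have "u ^ degree b = u ^ (degree b - degree c) * u ^ degree c"
      using assms(1) by (simp flip: power_add)
    ultimately show ?thesis
      unfolding \<phi>_def u_def[symmetric] by (simp add: poly_reflect_poly_nz mult.assoc)
  qed
  have "\<forall>\<^sub>F x in at_top. \<phi> (inverse (of_real x)) = poly c (of_real x) / poly b (of_real x)"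
    using eventually_gt_at_top[of 0] by eventually_elim (rule \<phi>_inverse)
  ultimately show ?thesis
    by (blast intro: Lim_transform_eventually)
qed

lemma rational_function_bounded:
  fixes c b :: "'a::real_normed_field poly"
  assumes "degree c \<le> degree b" and nz: "\<And>x::real. x \<ge> 0 \<Longrightarrow> poly b (of_real x) \<noteq> 0"
  shows "\<exists>M. \<forall>x::real \<ge> 0. norm (poly c (of_real x) / poly b (of_real x)) \<le> M"
proof -
  define f where "f x = poly c (of_real x) / poly b (of_real x)" for x :: real
  have "b \<noteq> 0"
    using nz[of 0] by auto
  then obtain L where L: "(f \<longlongrightarrow> L) at_top"
    using rational_function_convergent_at_top[OF assms(1)] unfolding f_def by blast
  have "\<forall>\<^sub>F x in at_top. norm (f x) < norm L + 1"
    using order_tendstoD(2)[OF tendsto_norm[OF L], of "norm L + 1"] by simp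
  then obtain R where R: "\<And>x. x \<ge> R \<Longrightarrow> norm (f x) \<le> norm L + 1"
    unfolding eventually_at_top_linorder by (meson less_imp_le)
  have "continuous_on {0..R} f"
    unfolding f_def using nz by (intro continuous_intros) auto
  then obtain M where M: "\<And>x. x \<in> {0..R} \<Longrightarrow> norm (f x) \<le> M"
    using compact_continuous_image[OF _ compact_Icc] compact_imp_bounded bounded_iff by (metis imageI)
  have "norm (f x) \<le> max M (norm L + 1)" if "x \<ge> 0" for x
    using M[of x] R[of x] that by (cases "x \<le> R") auto
  then show ?thesis
    unfolding f_def by blast
qed

lemma rational_function_absolutely_integrable:
  fixes a b :: "complex poly"
  assumes "degree a + 2 \<le> degree b" and nz: "\<And>x::real. x \<ge> 0 \<Longrightarrow> poly b (of_real x) \<noteq> 0"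
  shows "(\<lambda>x::real. poly a (of_real x) / poly b (of_real x)) absolutely_integrable_on {0..}"
proof -
  define c where "c = a * [:1, 1:]^2"
  have "degree c \<le> degree b"
    using assms(1) degree_mult_le[of a "[:1, 1:]^2"] unfolding c_def by (simp add: degree_power_eq)
  then obtain M where M: "\<And>x::real. x \<ge> 0 \<Longrightarrow> norm (poly c (of_real x) / poly b (of_real x)) \<le> M"
    using rational_function_bounded nz by blast
  have "norm (poly a (of_real x) / poly b (of_real x)) \<le> M * (1 / (1 + x)^2)" if "x \<ge> 0" for x
  proof -
    have "norm (1 + complex_of_real x) = 1 + x"
      using that by (metis abs_of_nonneg add_nonneg_nonneg norm_of_real of_real_1 of_real_add zero_le_one)
    then have "norm (poly c (of_real x) / poly b (of_real x)) =
               norm (poly a (of_real x) / poly b (of_real x)) * (1 + x)^2"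
      by (simp add: c_def norm_mult norm_divide norm_power)
    then show ?thesis
      using M[OF that] that by (simp add: field_simps)
  qed
  moreover have "(\<lambda>x. M * (1 / (1 + x)^2)) integrable_on {0::real..}"
    using has_integral_mult_right[OF has_integral_inverse_square_shifted] by blast
  ultimately show ?thesis
    using nz by (intro measurable_bounded_by_integrable_imp_absolutely_integrable
                   continuous_imp_measurable_on_sets_lebesgue continuous_intros) auto
qed

lemma has_integral_atLeast_of_tendsto:
  fixes f :: "real \<Rightarrow> 'a::euclidean_space"
  assumes f: "f absolutely_integrable_on {a..}"
    and lim: "((\<lambda>y. integral {a..y} f) \<longlongrightarrow> l) at_top"
  shows "(f has_integral l) {a..}"
proof -
  have "\<forall>\<^sub>F y in at_top. set_lebesgue_integral lebesgue {a..y} f = integral {a..y} f"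
    using eventually_ge_at_top[of a]
    by eventually_elim (intro set_lebesgue_integral_eq_integral set_integrable_subset[OF f]; auto)
  then have "((\<lambda>y. integral {a..y} f) \<longlongrightarrow> set_lebesgue_integral lebesgue {a..} f) at_top"
    using tendsto_set_lebesgue_integral_at_top[OF _ f] by (auto intro: Lim_transform_eventually)
  then have "integral {a..} f = l"
    using lim set_lebesgue_integral_eq_integral(2)[OF f] by (metis tendsto_unique trivial_limit_at_top_linorder)
  then show ?thesis
    using set_lebesgue_integral_eq_integral(1)[OF f] by (metis has_integral_integral)
qed

lemma of_real_diff_notin_nonpos_Reals:
  assumes "\<zeta> \<notin> complex_of_real ` {0..}" "x \<ge> 0"
  shows "complex_of_real x - \<zeta> \<notin> \<real>\<^sub>\<le>\<^sub>0"
proof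
  assume "complex_of_real x - \<zeta> \<in> \<real>\<^sub>\<le>\<^sub>0"
  then obtain t where "t \<le> 0" "\<zeta> = of_real (x - t)"
    by (auto elim!: nonpos_Reals_cases simp: algebra_simps)
  moreover have "x - t \<in> {0..}"
    using \<open>t \<le> 0\<close> assms(2) by simp
  ultimately show False
    using assms(1) by blast
qed

lemma has_integral_log_kernel:
  assumes \<zeta>: "\<zeta> \<notin> complex_of_real ` {0..}"
  shows "((\<lambda>x::real. 1 / (of_real x - \<zeta>) - 1 / (of_real x + 1)) has_integral - Ln (- \<zeta>)) {0..}"
proof (rule has_integral_atLeast_of_tendsto)
  have nz: "complex_of_real x - \<zeta> \<noteq> 0" "complex_of_real x + 1 \<noteq> 0" if "x \<ge> 0" for x
    using of_real_diff_notin_nonpos_Reals[OF \<zeta> that] that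
    by (fastforce, auto simp: complex_eq_iff)
  have poly_denom: "poly ([:-\<zeta>, 1:] * [:1, 1:]) w = (w - \<zeta>) * (w + 1)" for w
    by (simp add: algebra_simps)
  have "(\<lambda>x::real. poly [:\<zeta> + 1:] (of_real x) / poly ([:-\<zeta>, 1:] * [:1, 1:]) (of_real x))
          absolutely_integrable_on {0..}"
  proof (rule rational_function_absolutely_integrable)
    show "poly ([:-\<zeta>, 1:] * [:1, 1:]) (of_real x) \<noteq> 0" if "x \<ge> 0" for x
      unfolding poly_denom using nz[OF that] by simp
  qed (simp add: degree_mult_eq)
  then show "(\<lambda>x::real. 1 / (of_real x - \<zeta>) - 1 / (of_real x + 1)) absolutely_integrable_on {0..}"
  proof (rule absolutely_integrable_spike[OF _ negligible_empty])
    show "1 / (of_real x - \<zeta>) - 1 / (of_real x + 1) =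
          poly [:\<zeta> + 1:] (of_real x) / poly ([:-\<zeta>, 1:] * [:1, 1:]) (of_real x)"
      if "x \<in> {0..} - {}" for x
      using nz that by (simp add: poly_denom field_simps)
  qed
  define G where "G x = Ln (complex_of_real x - \<zeta>) - Ln (of_real x + 1)" for x :: real
  have FTC: "((\<lambda>x::real. 1 / (of_real x - \<zeta>) - 1 / (of_real x + 1)) has_integral (G y - G 0)) {0..y}"
    if "y \<ge> 0" for y
  proof (rule fundamental_theorem_of_calculus[OF that])
    fix x assume "x \<in> {0..y}"
    then have "complex_of_real x - \<zeta> \<notin> \<real>\<^sub>\<le>\<^sub>0" "complex_of_real x + 1 \<notin> \<real>\<^sub>\<le>\<^sub>0"
      using of_real_diff_notin_nonpos_Reals[OF \<zeta>] by (auto simp: complex_nonpos_Reals_iff)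
    then have "((\<lambda>w. Ln (w - \<zeta>) - Ln (w + 1)) has_field_derivative
                 1 / (of_real x - \<zeta>) - 1 / (of_real x + 1)) (at (of_real x))"
      by (auto intro!: derivative_eq_intros simp: divide_inverse)
    from has_vector_derivative_real_field[OF this]
    show "(G has_vector_derivative 1 / (of_real x - \<zeta>) - 1 / (of_real x + 1)) (at x within {0..y})"
      by (simp add: G_def[abs_def])
  qed
  have G_lim: "(G \<longlongrightarrow> 0) at_top"
  proof -
    have G_eq: "Ln (1 - (\<zeta> + 1) * of_real (inverse (y + 1))) = G y" if "y \<ge> 0" for y
    proof -
      have "1 - (\<zeta> + 1) * of_real (inverse (y + 1)) = (of_real y - \<zeta>) / of_real (y + 1)"
        using nz(2)[OF that] by (simp add: field_simps of_real_inverse add.commute)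
      then show ?thesis
        using Ln_divide_of_real[of "y + 1" "of_real y - \<zeta>"] Ln_of_real[of "y + 1"] nz[OF that] that
        by (simp add: G_def)
    qed
    have "((\<lambda>y::real. inverse (y + 1)) \<longlongrightarrow> 0) at_top"
      by real_asymp
    then have "((\<lambda>y::real. (\<zeta> + 1) * of_real (inverse (y + 1))) \<longlongrightarrow> (\<zeta> + 1) * of_real 0) at_top"
      by (intro tendsto_mult_left tendsto_of_real)
    from tendsto_diff[OF tendsto_const this, of 1]
    have "((\<lambda>y::real. 1 - (\<zeta> + 1) * of_real (inverse (y + 1))) \<longlongrightarrow> 1) at_top"
      by simp
    from isCont_tendsto_compose[OF continuous_at_Ln this]
    have "((\<lambda>y::real. Ln (1 - (\<zeta> + 1) * of_real (inverse (y + 1)))) \<longlongrightarrow> 0) at_top"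
      by simp
    moreover have "\<forall>\<^sub>F y in at_top. Ln (1 - (\<zeta> + 1) * of_real (inverse (y + 1))) = G y"
      using eventually_ge_at_top[of 0] by eventually_elim (rule G_eq)
    ultimately show ?thesis
      by (rule Lim_transform_eventually)
  qed
  have "G 0 = Ln (- \<zeta>)"
    by (simp add: G_def)
  with tendsto_diff[OF G_lim tendsto_const[of "G 0"]]
  have G_diff_lim: "((\<lambda>y. G y - G 0) \<longlongrightarrow> - Ln (- \<zeta>)) at_top"
    by simp
  have integral_eq: "\<forall>\<^sub>F y in at_top.
      integral {0..y} (\<lambda>x::real. 1 / (of_real x - \<zeta>) - 1 / (of_real x + 1)) = G y - G 0"
    using eventually_ge_at_top[of 0] by eventually_elim (rule integral_unique[OF FTC])
  show "((\<lambda>y. integral {0..y} (\<lambda>x::real. 1 / (of_real x - \<zeta>) - 1 / (of_real x + 1)))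
          \<longlongrightarrow> - Ln (- \<zeta>)) at_top"
    unfolding tendsto_cong[OF integral_eq] by (rule G_diff_lim)
qed

lemma absolutely_integrable_leading_term_correction:
  fixes r :: "complex poly"
  assumes "degree r \<ge> 1" and nz: "\<And>x::real. x \<ge> 0 \<Longrightarrow> poly r (of_real x) \<noteq> 0"
  shows "(\<lambda>x::real. 1 / (of_real x + 1) - lead_coeff r * of_real x ^ (degree r - 1) / poly r (of_real x))
           absolutely_integrable_on {0..}"
proof -
  define n where "n = degree r"
  define a where "a = r - monom (lead_coeff r) (n - 1) * [:1, 1:]"
  have nz1: "complex_of_real x + 1 \<noteq> 0" if "x \<ge> 0" for x
    using that by (simp add: complex_eq_iff)
  have poly_denom: "poly ([:1, 1:] * r) w = (w + 1) * poly r w" for w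
    by (simp add: algebra_simps)
  have "(\<lambda>x::real. poly a (of_real x) / poly ([:1, 1:] * r) (of_real x)) absolutely_integrable_on {0..}"
  proof (rule rational_function_absolutely_integrable)
    have "degree a \<le> n - 1"
      using assms(1) by (intro degree_le) (auto simp: a_def n_def coeff_monom_mult coeff_pCons coeff_eq_0 split: nat.split)
    moreover have "degree ([:1, 1:] * r) = n + 1"
      using assms(1) by (subst degree_mult_eq) (auto simp: n_def)
    ultimately show "degree a + 2 \<le> degree ([:1, 1:] * r)"
      using assms(1) by (simp add: n_def)
    show "poly ([:1, 1:] * r) (of_real x) \<noteq> 0" if "x \<ge> 0" for x
      unfolding poly_denom using nz[OF that] nz1[OF that] by simp
  qed
  then show ?thesis
  proof (rule absolutely_integrable_spike[OF _ negligible_empty])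
    fix x :: real
    assume "x \<in> {0..} - {}"
    then have "x \<ge> 0" by simp
    moreover have "complex_of_real x ^ n = complex_of_real x ^ (n - 1) * complex_of_real x"
      using assms(1) by (simp add: n_def flip: power_Suc2)
    ultimately show "1 / (of_real x + 1) - lead_coeff r * of_real x ^ (degree r - 1) / poly r (of_real x) =
                     poly a (of_real x) / poly ([:1, 1:] * r) (of_real x)"
      using nz nz1 by (simp add: a_def n_def poly_denom poly_monom field_simps)
  qed
qed

lemma has_integral_cauchy_transform_rational:
  fixes p r :: "complex poly"
  assumes dp: "degree p < degree r" and nz: "\<And>x::real. x \<ge> 0 \<Longrightarrow> poly r (of_real x) \<noteq> 0"
    and \<zeta>: "\<zeta> \<notin> complex_of_real ` {0..}" "poly r \<zeta> \<noteq> 0"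
  shows "((\<lambda>x::real. poly p (of_real x) / poly r (of_real x) / (of_real x - \<zeta>)) has_integral
           (poly p \<zeta> * (integral {0..} (\<lambda>x::real. 1 / (of_real x + 1) -
                           lead_coeff r * of_real x ^ (degree r - 1) / poly r (of_real x)) - Ln (- \<zeta>)) +
            (\<Sum>j<degree r - 1. poly (bezout_coeff p r j) \<zeta> *
                               integral {0..} (\<lambda>x::real. of_real x ^ j / poly r (of_real x)))) / poly r \<zeta>) {0..}"
proof -
  define n where "n = degree r"
  define f where "f x = 1 / (of_real x + 1) - lead_coeff r * of_real x ^ (n - 1) / poly r (of_real x)" for x :: real
  define g where "g j x = of_real x ^ j / poly r (of_real x)" for j and x :: real
  have "f absolutely_integrable_on {0..}"
    unfolding f_def[abs_def] n_def using dp nz by (intro absolutely_integrable_leading_term_correction) auto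
  then have f: "(f has_integral integral {0..} f) {0..}"
    by (simp add: absolutely_integrable_on_def has_integral_integral)
  have "g j absolutely_integrable_on {0..}" if "j < n - 1" for j
    using rational_function_absolutely_integrable[of "monom 1 j" r] that nz
    by (simp add: g_def[abs_def] n_def degree_monom_eq poly_monom)
  then have g: "(g j has_integral integral {0..} (g j)) {0..}" if "j < n - 1" for j
    using that by (simp add: absolutely_integrable_on_def has_integral_integral)
  have "((\<lambda>x. (poly p \<zeta> * ((1 / (of_real x - \<zeta>) - 1 / (of_real x + 1)) + f x) +
              (\<Sum>j<n - 1. poly (bezout_coeff p r j) \<zeta> * g j x)) / poly r \<zeta>)
         has_integral (poly p \<zeta> * (- Ln (- \<zeta>) + integral {0..} f) +
                       (\<Sum>j<n - 1. poly (bezout_coeff p r j) \<zeta> * integral {0..} (g j))) / poly r \<zeta>) {0..}"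
    using \<zeta> by (intro has_integral_divide has_integral_add has_integral_mult_right has_integral_sum
                 has_integral_log_kernel f g) auto
  then show ?thesis
  proof (rule has_integral_eq_rhs[OF has_integral_eq, rotated])
    fix x :: real
    assume "x \<in> {0..}"
    then have "of_real x \<noteq> \<zeta>" "poly r (of_real x) \<noteq> 0"
      using \<zeta> nz by auto
    then show "(poly p \<zeta> * ((1 / (of_real x - \<zeta>) - 1 / (of_real x + 1)) + f x) +
               (\<Sum>j<n - 1. poly (bezout_coeff p r j) \<zeta> * g j x)) / poly r \<zeta> =
               poly p (of_real x) / poly r (of_real x) / (of_real x - \<zeta>)"
      using bezout_partial_fraction[OF dp] \<zeta> by (simp add: f_def g_def n_def)
  qed (simp add: f_def[abs_def] g_def[abs_def] n_def algebra_simps)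
qed

theorem lemma8:
  fixes p r :: "complex poly"
  assumes deg: "degree r \<ge> degree p + 1"
    and nozero: "\<forall>x::real. x \<ge> 0 \<longrightarrow> poly r (complex_of_real x) \<noteq> 0"
  shows "\<exists>P :: complex poly. degree P \<le> degree r - 1 \<and>
    (\<forall>\<zeta>. \<zeta> \<notin> complex_of_real ` {0..} \<and> poly r \<zeta> \<noteq> 0 \<longrightarrow>
      ((\<lambda>\<omega>::real. (poly p (complex_of_real \<omega>) / poly r (complex_of_real \<omega>))
                    / (complex_of_real \<omega> - \<zeta>))
        has_integral ((poly P \<zeta> - poly p \<zeta> * Ln (- \<zeta>)) / poly r \<zeta>)) {0..})"
proof -
  define C where "C = integral {0..} (\<lambda>x::real. 1 / (of_real x + 1) -
                        lead_coeff r * of_real x ^ (degree r - 1) / poly r (of_real x))"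
  define c where "c j = integral {0..} (\<lambda>x::real. of_real x ^ j / poly r (of_real x))" for j
  define P where "P = smult C p + (\<Sum>j<degree r - 1. smult (c j) (bezout_coeff p r j))"
  have dp: "degree p < degree r"
    using deg by simp
  show ?thesis
  proof (intro exI[of _ P] conjI allI impI)
    show "degree P \<le> degree r - 1"
      using dp degree_bezout_coeff[of p "degree r" r] unfolding P_def
      by (intro degree_add_le degree_sum_le order.trans[OF degree_smult_le]) auto
  next
    fix \<zeta> assume "\<zeta> \<notin> complex_of_real ` {0..} \<and> poly r \<zeta> \<noteq> 0"
    moreover have "(poly P \<zeta> - poly p \<zeta> * Ln (- \<zeta>)) / poly r \<zeta> =
        (poly p \<zeta> * (C - Ln (- \<zeta>)) + (\<Sum>j<degree r - 1. poly (bezout_coeff p r j) \<zeta> * c j)) /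
        poly r \<zeta>"
      by (simp add: P_def poly_sum algebra_simps)
    ultimately show "((\<lambda>\<omega>::real. (poly p (complex_of_real \<omega>) / poly r (complex_of_real \<omega>))
                    / (complex_of_real \<omega> - \<zeta>))
        has_integral ((poly P \<zeta> - poly p \<zeta> * Ln (- \<zeta>)) / poly r \<zeta>)) {0..}"
      using has_integral_cauchy_transform_rational[OF dp] nozero by (simp add: C_def c_def)
  qed
qed

end
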